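(* Let $F$ be a finite field of characteristic $2$, let $n\ge 1$, and let $R$ be an even integer. Then there is a finite set of homogeneous polynomials of degree $R+1$ in the coefficients $a_{ij}$ ($1\le i\le j\le n$), with coefficients in $F$, such that for every quadratic form $Q(x_1,\ldots,x_n)=\sum_{1\le i\le j\le n}a_{ij}x_ix_j$ over $F$, these polynomials all vanish at $(a_{ij})$ if and only if $\mathrm{Rank}(Q)\le R$.
   Context: The rank of a quadratic form $Q$ over a field $F$ is the minimal integer $m$ such that there exist a quadratic form $Q'$ over $F$ in $m$ variables and linear forms $L_1,\ldots,L_m$ over $F$ with $Q(x_1,\ldots,x_n)=Q'(L_1,\ldots,L_m)$. *)

theory Defs
  imports Main
begin

text \<open>A quadratic form in n variables over a field, given by its coefficients
  a i j for 1 \<le> i \<le> j \<le> n (other entries of a are ignored), evaluated at x.\<close>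
definition qform :: "nat \<Rightarrow> (nat \<Rightarrow> nat \<Rightarrow> 'a::field) \<Rightarrow> (nat \<Rightarrow> 'a) \<Rightarrow> 'a" where
  "qform n a x = (\<Sum>i=1..n. \<Sum>j=i..n. a i j * x i * x j)"

definition qrank :: "nat \<Rightarrow> (nat \<Rightarrow> nat \<Rightarrow> 'a::field) \<Rightarrow> nat" where
  "qrank n a = (LEAST m. \<exists>(b :: nat \<Rightarrow> nat \<Rightarrow> 'a) (l :: nat \<Rightarrow> nat \<Rightarrow> 'a).
      \<forall>x. qform n a x = qform m b (\<lambda>k. \<Sum>i=1..n. l k i * x i))"

definition qvars :: "nat \<Rightarrow> (nat \<times> nat) set" where
  "qvars n = {(i, j). 1 \<le> i \<and> i \<le> j \<and> j \<le> n}"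

text \<open>Monomials of total degree d in the variables qvars n, as exponent functions.\<close>
definition hmonos :: "nat \<Rightarrow> nat \<Rightarrow> ((nat \<times> nat) \<Rightarrow> nat) set" where
  "hmonos n d = {e. (\<forall>v. v \<notin> qvars n \<longrightarrow> e v = 0) \<and> (\<Sum>v\<in>qvars n. e v) = d}"

text \<open>A homogeneous polynomial of degree d in the variables qvars n, with coefficients
  in 'a, is given by its coefficient function on monomials, supported on hmonos n d.\<close>
definition homog_poly :: "nat \<Rightarrow> nat \<Rightarrow> (((nat \<times> nat) \<Rightarrow> nat) \<Rightarrow> 'a::field) \<Rightarrow> bool" where
  "homog_poly n d p \<longleftrightarrow> (\<forall>e. p e \<noteq> 0 \<longrightarrow> e \<in> hmonos n d)"

definition eval_homog :: "nat \<Rightarrow> nat \<Rightarrow> (((nat \<times> nat) \<Rightarrow> nat) \<Rightarrow> 'a::field)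
    \<Rightarrow> (nat \<Rightarrow> nat \<Rightarrow> 'a) \<Rightarrow> 'a" where
  "eval_homog n d p a = (\<Sum>e\<in>hmonos n d. p e * (\<Prod>v\<in>qvars n. a (fst v) (snd v) ^ e v))"

end

theory Submission
  imports Defs
begin

text \<open>
  Since F is finite we may take ALL such polynomials vanishing on the
  forms of rank at most R; the content is that for every form Q of rank > 2k there is one such
  polynomial not vanishing at Q. It is built from Pfaffians of Gram matrices of the polar form:
  a form of rank > 2k either contains a symplectic family of k + 1 hyperbolic pairs, whose Gram
  Pfaffian is a polynomial of degree k + 1 in the coefficients, or k pairs plus an orthogonal
  anisotropic vector z, in which case Q evaluated at the adjugate vector of the family
  (a polynomial of degree 2k + 1) equals Q(z). Both vanish on forms of rank at most 2k, because
  such forms factor through at most 2k linear forms, making the vectors involved linearly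
  dependent. Padding with powers of a nonzero coefficient gives degree exactly 2k + 1.
\<close>

section \<open>Arithmetic in characteristic 2\<close>

lemma char2_double:
  assumes "CHAR('a::ring_1) = 2"
  shows "(x::'a) + x = 0"
  using uminus_CHAR_2[OF assms, of x] by (metis add.right_inverse)

lemma char2_square_add:
  assumes "CHAR('a::comm_ring_1) = 2"
  shows "((x::'a) + y) ^ 2 = x ^ 2 + y ^ 2"
  using char2_double[OF assms, of "x * y"] by (simp add: power2_eq_square algebra_simps)

lemma char2_square_sum:
  assumes "CHAR('a::comm_ring_1) = 2" "finite L"
  shows "(\<Sum>l\<in>L. (t l :: 'a)) ^ 2 = (\<Sum>l\<in>L. t l ^ 2)"
  using assms(2) by (induction L rule: finite_induct) (auto simp: char2_square_add[OF assms(1)])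

text \<open>Over a finite field of characteristic 2 the Frobenius map is injective, hence
  surjective: every element is a square.\<close>

lemma char2_square_root:
  assumes "CHAR('a::{field,finite}) = 2"
  shows "\<exists>r::'a. r ^ 2 = c"
proof -
  have "inj (\<lambda>x::'a. x ^ 2)"
  proof (rule injI)
    fix x y :: 'a
    assume "x ^ 2 = y ^ 2"
    then have "(x + y) ^ 2 = 0"
      using char2_square_add[OF assms, of x y] char2_double[OF assms, of "y ^ 2"] by simp
    then have "x = - y" by (simp add: eq_neg_iff_add_eq_0)
    then show "x = y" using uminus_CHAR_2[OF assms] by simp
  qed
  then have "surj (\<lambda>x::'a. x ^ 2)" by (rule finite_UNIV_inj_surj[OF finite_UNIV])
  then show ?thesis by (metis surjD)
qed

section \<open>Pfaffians\<close>

text \<open>The (sign-free) Pfaffian of a matrix g on a finite index set I, defined by expansion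
  along the row of the least index. Signs are irrelevant in characteristic 2, which is the
  only setting where it is used; odd index sets get Pfaffian 0.\<close>

function pfaff :: "(nat \<Rightarrow> nat \<Rightarrow> 'a::comm_ring_1) \<Rightarrow> nat set \<Rightarrow> 'a" where
  "pfaff g I = (if finite I \<and> I \<noteq> {}
     then (\<Sum>j\<in>I - {Min I}. g (Min I) j * pfaff g (I - {Min I, j})) else 1)"
  by auto
termination
proof (relation "measure (\<lambda>(g, I). card I)")
  fix g :: "nat \<Rightarrow> nat \<Rightarrow> 'a" and I :: "nat set" and j :: nat
  assume "finite I \<and> I \<noteq> {}" "j \<in> I - {Min I}"
  then have "card (I - {Min I, j}) < card I"
    by (intro psubset_card_mono) auto
  then show "((g, I - {Min I, j}), (g, I)) \<in> measure (\<lambda>(g, I). card I)"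
    by simp
qed simp

declare pfaff.simps [simp del]

lemma pfaff_empty [simp]: "pfaff g {} = 1"
  by (simp add: pfaff.simps)

text \<open>The defining recursion for nonempty finite index sets (the defining equation itself is
  not a simp rule, since it would unfold indefinitely).\<close>

lemma pfaff_rec:
  assumes "finite I" "I \<noteq> {}"
  shows "pfaff g I = (\<Sum>j\<in>I - {Min I}. g (Min I) j * pfaff g (I - {Min I, j}))"
  using assms by (subst pfaff.simps) simp

lemma pfaff_cong:
  assumes "finite I" "\<And>x y. x \<in> I \<Longrightarrow> y \<in> I \<Longrightarrow> g x y = g' x y"
  shows "pfaff g I = pfaff g' I"
  using assms
proof (induction g I rule: pfaff.induct)
  case (1 g I)
  show ?case
  proof (cases "I = {}")
    case False
    with "1.prems" have "Min I \<in> I" by simp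
    with 1 False show ?thesis by (auto simp: pfaff_rec intro!: sum.cong)
  qed simp
qed

lemma sum_offdiag_swap:
  assumes "finite A"
  shows "(\<Sum>p\<in>A. \<Sum>j\<in>A - {p}. F p j) = (\<Sum>j\<in>A. \<Sum>p\<in>A - {j}. F p j)"
proof -
  have "(\<Sum>p\<in>A. \<Sum>j\<in>{j \<in> A. p \<noteq> j}. F p j) = (\<Sum>j\<in>A. \<Sum>p\<in>{p \<in> A. p \<noteq> j}. F p j)"
    by (rule sum.swap_restrict[OF assms assms])
  moreover have "\<And>p. {j \<in> A. p \<noteq> j} = A - {p}" "\<And>j. {p \<in> A. p \<noteq> j} = A - {j}" by auto
  ultimately show ?thesis by simp
qed

text \<open>Expanding along a row i other than the first one, and then expanding every
  minor along the first row, yields a double sum over pairs of remaining indices.\<close>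

lemma pfaff_second_row:
  assumes fin: "finite I" and i: "i \<in> I" "i \<noteq> Min I"
  defines "m \<equiv> Min I" and "A \<equiv> I - {Min I, i}"
  shows "(\<Sum>j\<in>I - {i}. g i j * pfaff g (I - {i, j})) =
    g i m * pfaff g (I - {m, i}) +
    (\<Sum>j\<in>A. \<Sum>p\<in>A - {j}. g m p * (g i j * pfaff g (I - {m, i, p, j})))"
proof -
  have "I \<noteq> {}" using i by auto
  then have m: "m \<in> I" "\<And>x. x \<in> I \<Longrightarrow> m \<le> x" using fin by (simp_all add: m_def)
  have inner: "pfaff g (I - {i, j}) = (\<Sum>p\<in>A - {j}. g m p * pfaff g (I - {m, i, p, j}))"
    if j: "j \<in> A" for j
  proof -
    have ne: "I - {i, j} \<noteq> {}" and min: "Min (I - {i, j}) = m"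
      using m fin i j by (auto simp: A_def m_def intro!: Min_eqI)
    have "\<And>p. I - {i, j} - {m, p} = I - {m, i, p, j}" "I - {i, j} - {m} = A - {j}"
      by (auto simp: A_def m_def)
    then show ?thesis using pfaff_rec[OF _ ne, of g] fin min by simp
  qed
  have "(\<Sum>j\<in>I - {i}. g i j * pfaff g (I - {i, j})) =
      g i m * pfaff g (I - {i, m}) + (\<Sum>j\<in>A. g i j * pfaff g (I - {i, j}))"
    using fin i m by (subst sum.remove[of _ m]) (auto simp: A_def m_def intro!: sum.cong)
  also have "I - {i, m} = I - {m, i}" by auto
  finally show ?thesis
    by (simp add: inner sum_distrib_left mult.left_commute cong: sum.cong)
qed

lemma pfaff_expand:
  assumes "finite I" "i \<in> I" "\<And>x y. x \<in> I \<Longrightarrow> y \<in> I \<Longrightarrow> g x y = g y x"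
  shows "pfaff g I = (\<Sum>j\<in>I - {i}. g i j * pfaff g (I - {i, j}))"
  using assms
proof (induction "card I" arbitrary: I i rule: less_induct)
  case less
  define m where "m = Min I"
  define A where "A = I - {m, i}"
  have ne: "I \<noteq> {}" using less.prems by auto
  then have mI: "m \<in> I" using less.prems by (simp add: m_def)
  show ?case
  proof (cases "i = m")
    case True
    then show ?thesis using pfaff_rec[OF less.prems(1) ne] by (simp add: m_def)
  next
    case False
    have inner: "pfaff g (I - {m, p}) = (\<Sum>j\<in>A - {p}. g i j * pfaff g (I - {m, i, p, j}))"
      if p: "p \<in> A" for p
    proof -
      have "card (I - {m, p}) < card I"
        using less.prems(1) mI p by (intro psubset_card_mono) (auto simp: A_def)
      then have "pfaff g (I - {m, p}) = (\<Sum>j\<in>I - {m, p} - {i}. g i j * pfaff g (I - {m, p} - {i, j}))"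
        using less.prems p False by (intro less.hyps) (auto simp: A_def)
      moreover have "\<And>j. I - {m, p} - {i, j} = I - {m, i, p, j}" "I - {m, p} - {i} = A - {p}"
        by (auto simp: A_def)
      ultimately show ?thesis by simp
    qed
    have "pfaff g I = g m i * pfaff g (I - {m, i}) + (\<Sum>p\<in>A. g m p * pfaff g (I - {m, p}))"
      using pfaff_rec[OF less.prems(1) ne, of g] less.prems False
      by (subst (asm) sum.remove[of _ i]) (auto simp: m_def A_def intro!: sum.cong)
    also have "\<dots> = g m i * pfaff g (I - {m, i}) +
        (\<Sum>p\<in>A. \<Sum>j\<in>A - {p}. g m p * (g i j * pfaff g (I - {m, i, p, j})))"
      by (simp add: inner sum_distrib_left cong: sum.cong)
    also have "(\<Sum>p\<in>A. \<Sum>j\<in>A - {p}. g m p * (g i j * pfaff g (I - {m, i, p, j}))) =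
        (\<Sum>j\<in>A. \<Sum>p\<in>A - {j}. g m p * (g i j * pfaff g (I - {m, i, p, j})))"
      by (rule sum_offdiag_swap) (simp add: A_def less.prems(1))
    also have "g m i = g i m" using less.prems mI by simp
    also have "g i m * pfaff g (I - {m, i}) +
        (\<Sum>j\<in>A. \<Sum>p\<in>A - {j}. g m p * (g i j * pfaff g (I - {m, i, p, j}))) =
        (\<Sum>j\<in>I - {i}. g i j * pfaff g (I - {i, j}))"
      using pfaff_second_row[OF less.prems(1,2) False[unfolded m_def], of g]
      by (simp add: m_def A_def)
    finally show ?thesis .
  qed
qed

lemma pfaff_zero_row:
  assumes "finite I" "i \<in> I" "\<And>x y. x \<in> I \<Longrightarrow> y \<in> I \<Longrightarrow> g x y = g y x"
    and "\<And>y. y \<in> I \<Longrightarrow> g i y = 0"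
  shows "pfaff g I = 0"
  using pfaff_expand[OF assms(1-3)] assms(4) by simp

lemma sum_offdiag_char2:
  fixes h :: "nat \<Rightarrow> nat \<Rightarrow> 'a::comm_ring_1"
  assumes "CHAR('a) = 2" "finite A" "\<And>j p. h j p = h p j"
  shows "(\<Sum>j\<in>A. \<Sum>p\<in>A - {j}. h j p) = 0"
  using assms(2)
proof (induction A rule: finite_induct)
  case (insert x A)
  have "\<And>j. j \<in> A \<Longrightarrow> insert x A - {j} = insert x (A - {j})" "insert x A - {x} = A"
    using insert by auto
  then have "(\<Sum>j\<in>insert x A. \<Sum>p\<in>insert x A - {j}. h j p)
      = (\<Sum>p\<in>A. h x p) + (\<Sum>j\<in>A. h j x + (\<Sum>p\<in>A - {j}. h j p))"
    using insert by (simp cong: sum.cong)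
  also have "\<dots> = (\<Sum>p\<in>A. h x p) + (\<Sum>p\<in>A. h x p)"
    using insert by (simp add: sum.distrib assms(3)[of _ x])
  finally show ?case using char2_double[OF assms(1)] by simp
qed simp

lemma pfaff_equal_rows:
  fixes g :: "nat \<Rightarrow> nat \<Rightarrow> 'a::comm_ring_1"
  assumes ch: "CHAR('a) = 2" and fin: "finite I" and iI: "i \<in> I" and lI: "l \<in> I" and "i \<noteq> l"
    and sym: "\<And>x y. x \<in> I \<Longrightarrow> y \<in> I \<Longrightarrow> g x y = g y x"
    and diag: "\<And>x. x \<in> I \<Longrightarrow> g x x = 0"
    and row: "\<And>z. z \<in> I \<Longrightarrow> g i z = g l z"
  shows "pfaff g I = 0"
proof -
  define A where "A = I - {i, l}"
  have inner: "pfaff g (I - {i, j}) = (\<Sum>p\<in>A - {j}. g i p * pfaff g (I - {i, l, j, p}))"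
    if j: "j \<in> A" for j
  proof -
    have "pfaff g (I - {i, j}) = (\<Sum>p\<in>I - {i, j} - {l}. g l p * pfaff g (I - {i, j} - {l, p}))"
      by (rule pfaff_expand) (use fin lI \<open>i \<noteq> l\<close> j sym in \<open>auto simp: A_def\<close>)
    moreover have "\<And>p. I - {i, j} - {l, p} = I - {i, l, j, p}" "I - {i, j} - {l} = A - {j}"
      by (auto simp: A_def)
    ultimately show ?thesis using row by (auto simp: A_def intro!: sum.cong)
  qed
  have "pfaff g I = g i l * pfaff g (I - {i, l}) + (\<Sum>j\<in>A. g i j * pfaff g (I - {i, j}))"
    using pfaff_expand[OF fin iI sym] lI \<open>i \<noteq> l\<close> fin
    by (subst (asm) sum.remove[of _ l]) (auto simp: A_def intro!: sum.cong)
  also have "g i l = 0" using row[OF lI] diag[OF lI] by simp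
  also have "(\<Sum>j\<in>A. g i j * pfaff g (I - {i, j})) =
      (\<Sum>j\<in>A. \<Sum>p\<in>A - {j}. g i j * g i p * pfaff g (I - {i, l, j, p}))"
    by (simp add: inner sum_distrib_left mult.assoc cong: sum.cong)
  also have "\<dots> = 0"
  proof (rule sum_offdiag_char2[OF ch])
    show "finite A" using fin by (simp add: A_def)
    fix j p
    have "{i, l, j, p} = {i, l, p, j}" by auto
    then show "g i j * g i p * pfaff g (I - {i, l, j, p}) = g i p * g i j * pfaff g (I - {i, l, p, j})"
      by (simp add: mult.commute)
  qed
  finally show ?thesis by simp
qed

lemma pfaff_relabel:
  assumes "finite J" "inj_on h J"
    and "\<And>x y. x \<in> J \<Longrightarrow> y \<in> J \<Longrightarrow> g' (h x) (h y) = g x y"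
    and "\<And>x y. x \<in> h ` J \<Longrightarrow> y \<in> h ` J \<Longrightarrow> g' x y = g' y x"
  shows "pfaff g' (h ` J) = pfaff g J"
  using assms
proof (induction "card J" arbitrary: J rule: less_induct)
  case less
  show ?case
  proof (cases "J = {}")
    case False
    define m where "m = Min J"
    have mJ: "m \<in> J" using False less.prems unfolding m_def by simp
    have img: "\<And>j. j \<in> J \<Longrightarrow> h ` J - {h m, h j} = h ` (J - {m, j})" "h ` J - {h m} = h ` (J - {m})"
      using less.prems(2) mJ by (auto simp: inj_on_def)
    have IH: "pfaff g' (h ` (J - {m, j})) = pfaff g (J - {m, j})" if j: "j \<in> J - {m}" for j
    proof (rule less.hyps)
      show "card (J - {m, j}) < card J" using less.prems(1) mJ j by (intro psubset_card_mono) auto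
      show "inj_on h (J - {m, j})" using less.prems(2) by (rule inj_on_subset) auto
    qed (use less.prems in auto)
    have "pfaff g' (h ` J) = (\<Sum>y\<in>h ` (J - {m}). g' (h m) y * pfaff g' (h ` J - {h m, y}))"
      using pfaff_expand[of "h ` J" "h m" g'] less.prems mJ img(2) by simp
    also have "\<dots> = (\<Sum>j\<in>J - {m}. g' (h m) (h j) * pfaff g' (h ` J - {h m, h j}))"
      by (subst sum.reindex) (use less.prems(2) in \<open>auto simp: inj_on_def\<close>)
    also have "\<dots> = (\<Sum>j\<in>J - {m}. g m j * pfaff g (J - {m, j}))"
      using IH img(1) less.prems(3) mJ by (auto intro!: sum.cong)
    also have "\<dots> = pfaff g J"
      unfolding m_def by (rule pfaff_rec[symmetric]) (use less.prems False in auto)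
    finally show ?thesis .
  qed simp
qed

section \<open>Quadratic and polar forms\<close>

definition polar :: "nat \<Rightarrow> (nat \<Rightarrow> nat \<Rightarrow> 'a::field) \<Rightarrow> (nat \<Rightarrow> 'a) \<Rightarrow> (nat \<Rightarrow> 'a) \<Rightarrow> 'a" where
  "polar n a x y = qform n a (\<lambda>k. x k + y k) - qform n a x - qform n a y"

lemma polar_formula:
  "polar n a x y = (\<Sum>i=1..n. \<Sum>j=i..n. a i j * (x i * y j + y i * x j))"
  unfolding polar_def qform_def by (simp add: sum_subtractf[symmetric] algebra_simps)

lemma qform_add: "qform n a (\<lambda>k. x k + y k) = qform n a x + qform n a y + polar n a x y"
  unfolding polar_def by simp

lemma qform_smult: "qform n a (\<lambda>k. c * x k) = c ^ 2 * qform n a x"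
  unfolding qform_def by (simp add: sum_distrib_left power2_eq_square algebra_simps)

lemma qform_zero: "qform n a (\<lambda>k. 0) = 0"
  unfolding qform_def by simp

lemma qform_cong:
  assumes "\<And>k. k \<in> {1..n} \<Longrightarrow> x k = y k"
  shows "qform n a x = qform n a y"
  unfolding qform_def using assms by (intro sum.cong refl) auto

lemma polar_cong:
  assumes "\<And>k. k \<in> {1..n} \<Longrightarrow> x k = y k"
  shows "polar n a x z = polar n a y z"
  unfolding polar_formula using assms by (intro sum.cong refl) auto

lemma polar_sym: "polar n a x y = polar n a y x"
  unfolding polar_def by (simp add: add.commute)

lemma polar_diag:
  assumes "CHAR('a::field) = 2"
  shows "polar n (a :: nat \<Rightarrow> nat \<Rightarrow> 'a) x x = 0"
  unfolding polar_formula by (simp add: char2_double[OF assms])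

lemma polar_add: "polar n a (\<lambda>k. x k + y k) z = polar n a x z + polar n a y z"
  unfolding polar_formula by (simp add: sum.distrib[symmetric] algebra_simps)

lemma polar_diff: "polar n a (\<lambda>k. x k - y k) z = polar n a x z - polar n a y z"
  unfolding polar_formula by (simp add: sum_subtractf[symmetric] algebra_simps)

lemma polar_smult: "polar n a (\<lambda>k. c * x k) z = c * polar n a x z"
  unfolding polar_formula by (simp add: sum_distrib_left algebra_simps)

lemma polar_smult_right: "polar n a x (\<lambda>k. c * y k) = c * polar n a x y"
  using polar_smult[of n a c y x] by (simp add: polar_sym)

lemma polar_lincomb:
  assumes "finite L" "\<And>k. k \<in> {1..n} \<Longrightarrow> y k = (\<Sum>l\<in>L. c l * w l k)"
  shows "polar n a y z = (\<Sum>l\<in>L. c l * polar n a (w l) z)"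
proof -
  have "polar n a y z = polar n a (\<lambda>k. \<Sum>l\<in>L. c l * w l k) z"
    by (rule polar_cong) (use assms in auto)
  also have "\<dots> = (\<Sum>i=1..n. \<Sum>j=i..n. \<Sum>l\<in>L. c l * (a i j * (w l i * z j + z i * w l j)))"
    unfolding polar_formula
    by (intro sum.cong refl) (simp add: sum_distrib_left sum_distrib_right sum.distrib[symmetric] algebra_simps)
  also have "\<dots> = (\<Sum>l\<in>L. \<Sum>i=1..n. \<Sum>j=i..n. c l * (a i j * (w l i * z j + z i * w l j)))"
    by (simp only: sum.swap[of _ L])
  also have "\<dots> = (\<Sum>l\<in>L. c l * polar n a (w l) z)"
    unfolding polar_formula by (simp add: sum_distrib_left)
  finally show ?thesis .
qed

lemma polar_sum:
  assumes "finite L"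
  shows "polar n a (\<lambda>k. \<Sum>l\<in>L. w l k) z = (\<Sum>l\<in>L. polar n a (w l) z)"
  using polar_lincomb[OF assms, of n "\<lambda>k. \<Sum>l\<in>L. w l k" "\<lambda>_. 1" w a z] by simp

definition unit_vec :: "nat \<Rightarrow> nat \<Rightarrow> 'a::field" where
  "unit_vec p = (\<lambda>k. if k = p then 1 else 0)"

lemma unit_vec_expansion: "k \<in> {1..n} \<Longrightarrow> x k = (\<Sum>p=1..n. x p * unit_vec p k)"
  by (simp add: unit_vec_def if_distrib cong: if_cong)

lemma qform_sum_orth:
  assumes "finite L" "\<And>i j. i \<in> L \<Longrightarrow> j \<in> L \<Longrightarrow> i \<noteq> j \<Longrightarrow> polar n a (w i) (w j) = 0"
  shows "qform n a (\<lambda>k. \<Sum>l\<in>L. w l k) = (\<Sum>l\<in>L. qform n a (w l))"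
  using assms
proof (induction L rule: finite_induct)
  case (insert x F)
  have "qform n a (\<lambda>k. \<Sum>l\<in>insert x F. w l k) = qform n a (\<lambda>k. w x k + (\<Sum>l\<in>F. w l k))"
    using insert by simp
  also have "\<dots> = qform n a (w x) + qform n a (\<lambda>k. \<Sum>l\<in>F. w l k) + (\<Sum>l\<in>F. polar n a (w l) (w x))"
    by (simp add: qform_add polar_sym[of n a "w x"] polar_sum[OF insert(1)])
  also have "(\<Sum>l\<in>F. polar n a (w l) (w x)) = 0"
    using insert.prems insert.hyps by (intro sum.neutral) auto
  finally show ?case using insert by simp
qed (simp add: qform_zero)

section \<open>Linear dependence\<close>

text \<open>Gaussian elimination step: a relation among the vectors with the r-th coordinate
  eliminated lifts to a relation among the original vectors.\<close>

lemma relation_lift: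
  fixes u :: "nat \<Rightarrow> nat \<Rightarrow> 'a::field"
  assumes fin: "finite J" and p: "p \<in> J"
  shows "(\<Sum>l\<in>J. (c'(p := - (\<Sum>l\<in>J - {p}. c' l * u l r) / u p r)) l * u l k) =
    (\<Sum>l\<in>J - {p}. c' l * (u l k - (u l r / u p r) * u p k))"
proof -
  let ?c = "c'(p := - (\<Sum>l\<in>J - {p}. c' l * u l r) / u p r)"
  have "(\<Sum>l\<in>J - {p}. ?c l * u l k) = (\<Sum>l\<in>J - {p}. c' l * u l k)"
    by (rule sum.cong) auto
  then have "(\<Sum>l\<in>J. ?c l * u l k) = ?c p * u p k + (\<Sum>l\<in>J - {p}. c' l * u l k)"
    using fin p by (simp add: sum.remove)
  also have "\<dots> = (\<Sum>l\<in>J - {p}. c' l * u l k) - (\<Sum>l\<in>J - {p}. c' l * u l r) / u p r * u p k"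
    by simp
  also have "\<dots> = (\<Sum>l\<in>J - {p}. c' l * (u l k - (u l r / u p r) * u p k))"
    by (simp add: right_diff_distrib sum_subtractf sum_distrib_left sum_distrib_right
        sum_divide_distrib mult_ac)
  finally show ?thesis .
qed

lemma exists_relation:
  fixes u :: "nat \<Rightarrow> nat \<Rightarrow> 'a::field"
  shows "finite J \<Longrightarrow> m < card J \<Longrightarrow>
    \<exists>c. (\<exists>x\<in>J. c x \<noteq> 0) \<and> (\<forall>k\<in>{1..m}. (\<Sum>l\<in>J. c l * u l k) = 0)"
proof (induction m arbitrary: J u)
  case 0
  then obtain x where "x \<in> J" by fastforce
  then show ?case by (intro exI[of _ "\<lambda>_. 1"]) auto
next
  case (Suc m)
  show ?case
  proof (cases "\<forall>l\<in>J. u l (Suc m) = 0")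
    case True
    obtain c where c: "\<exists>x\<in>J. c x \<noteq> 0" "\<forall>k\<in>{1..m}. (\<Sum>l\<in>J. c l * u l k) = 0"
      using Suc.IH[of J u] Suc.prems by auto
    then have "\<forall>k\<in>{1..Suc m}. (\<Sum>l\<in>J. c l * u l k) = 0"
      using True by (auto simp: le_Suc_eq)
    then show ?thesis using c by blast
  next
    case False
    then obtain p where p: "p \<in> J" "u p (Suc m) \<noteq> 0" by auto
    define u' where "u' = (\<lambda>l k. u l k - (u l (Suc m) / u p (Suc m)) * u p k)"
    have "\<exists>c'. (\<exists>x\<in>J - {p}. c' x \<noteq> 0) \<and> (\<forall>k\<in>{1..m}. (\<Sum>l\<in>J - {p}. c' l * u' l k) = 0)"
      using Suc.prems p by (intro Suc.IH) auto
    then obtain c' where c': "\<exists>x\<in>J - {p}. c' x \<noteq> 0" "\<forall>k\<in>{1..m}. (\<Sum>l\<in>J - {p}. c' l * u' l k) = 0"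
      by blast
    define c where "c = c'(p := - (\<Sum>l\<in>J - {p}. c' l * u l (Suc m)) / u p (Suc m))"
    have "(\<Sum>l\<in>J. c l * u l k) = (\<Sum>l\<in>J - {p}. c' l * u' l k)" for k
      unfolding c_def u'_def by (rule relation_lift[OF Suc.prems(1) p(1)])
    moreover have "(\<Sum>l\<in>J - {p}. c' l * u' l (Suc m)) = 0" using p by (simp add: u'_def)
    ultimately have "\<forall>k\<in>{1..Suc m}. (\<Sum>l\<in>J. c l * u l k) = 0"
      using c'(2) by (auto simp: le_Suc_eq)
    moreover have "\<exists>x\<in>J. c x \<noteq> 0" using c'(1) by (auto simp: c_def)
    ultimately show ?thesis by blast
  qed
qed

lemma exists_dependent_member:
  fixes u :: "nat \<Rightarrow> nat \<Rightarrow> 'a::field"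
  assumes "finite J" "m < card J"
  shows "\<exists>i0\<in>J. \<exists>c. \<forall>k\<in>{1..m}. u i0 k = (\<Sum>l\<in>J - {i0}. c l * u l k)"
proof -
  obtain c x where x: "x \<in> J" "c x \<noteq> 0" and c: "\<forall>k\<in>{1..m}. (\<Sum>l\<in>J. c l * u l k) = 0"
    using exists_relation[OF assms, of u] by auto
  have "u x k = (\<Sum>l\<in>J - {x}. (- c l / c x) * u l k)" if "k \<in> {1..m}" for k
  proof -
    have "c x * u x k + (\<Sum>l\<in>J - {x}. c l * u l k) = 0"
      using c that x assms(1) by (simp add: sum.remove)
    then have "u x k = - (\<Sum>l\<in>J - {x}. c l * u l k) / c x"
      using x(2) by (simp add: field_simps eq_neg_iff_add_eq_0 add.commute)
    then show ?thesis by (simp add: sum_divide_distrib sum_negf)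
  qed
  then show ?thesis using x by (intro bexI[OF _ x(1)] exI[of _ "\<lambda>l. - c l / c x"]) auto
qed

section \<open>Gram Pfaffians of dependent families\<close>

definition gram :: "nat \<Rightarrow> (nat \<Rightarrow> nat \<Rightarrow> 'a::field) \<Rightarrow> (nat \<Rightarrow> nat \<Rightarrow> 'a) \<Rightarrow> nat \<Rightarrow> nat \<Rightarrow> 'a" where
  "gram n a u = (\<lambda>x y. polar n a (u x) (u y))"

definition gram_adj :: "nat \<Rightarrow> (nat \<Rightarrow> nat \<Rightarrow> 'a::field) \<Rightarrow> nat set \<Rightarrow> (nat \<Rightarrow> nat \<Rightarrow> 'a) \<Rightarrow> nat \<Rightarrow> 'a" where
  "gram_adj n a J u = (\<lambda>k. \<Sum>t\<in>J. pfaff (gram n a u) (J - {t}) * u t k)"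

lemma gram_sym: "gram n a u x y = gram n a u y x"
  unfolding gram_def by (rule polar_sym)

lemma pfaff_gram_expand:
  "finite K \<Longrightarrow> i \<in> K \<Longrightarrow>
    pfaff (gram n a u) K = (\<Sum>j\<in>K - {i}. gram n a u i j * pfaff (gram n a u) (K - {i, j}))"
  by (rule pfaff_expand) (auto simp: gram_sym)

lemma pfaff_gram_lincomb_row:
  assumes K: "finite K" "i0 \<in> K" and "finite L"
    and comb: "\<And>k. k \<in> {1..m} \<Longrightarrow> u i0 k = (\<Sum>l\<in>L. c l * u l k)"
  shows "pfaff (gram m b u) K = (\<Sum>l\<in>L. c l * pfaff (gram m b (u(i0 := u l))) K)"
proof -
  have entry: "gram m b (u(i0 := u l)) i0 j * pfaff (gram m b (u(i0 := u l))) (K - {i0, j}) =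
      polar m b (u l) (u j) * pfaff (gram m b u) (K - {i0, j})" if "j \<noteq> i0" for l j
  proof -
    have "pfaff (gram m b (u(i0 := u l))) (K - {i0, j}) = pfaff (gram m b u) (K - {i0, j})"
      by (rule pfaff_cong) (use K in \<open>auto simp: gram_def\<close>)
    then show ?thesis using that by (simp add: gram_def)
  qed
  have row: "gram m b u i0 j = (\<Sum>l\<in>L. c l * polar m b (u l) (u j))" for j
    unfolding gram_def by (rule polar_lincomb[OF assms(3) comb])
  have "pfaff (gram m b u) K =
      (\<Sum>j\<in>K - {i0}. \<Sum>l\<in>L. c l * (polar m b (u l) (u j) * pfaff (gram m b u) (K - {i0, j})))"
    by (simp add: pfaff_gram_expand[OF K] row sum_distrib_right mult.assoc)
  also have "\<dots> = (\<Sum>l\<in>L. c l * (\<Sum>j\<in>K - {i0}. gram m b (u(i0 := u l)) i0 j *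
      pfaff (gram m b (u(i0 := u l))) (K - {i0, j})))"
    by (subst sum.swap) (auto simp: sum_distrib_left entry intro!: sum.cong)
  also have "\<dots> = (\<Sum>l\<in>L. c l * pfaff (gram m b (u(i0 := u l))) K)"
    by (simp add: pfaff_gram_expand[OF K])
  finally show ?thesis .
qed

lemma pfaff_gram_repeated:
  assumes ch: "CHAR('a::field) = 2" and "finite K" "i0 \<in> K" "l \<in> K" "l \<noteq> i0"
  shows "pfaff (gram m (b :: nat \<Rightarrow> nat \<Rightarrow> 'a) (u(i0 := u l))) K = 0"
  by (rule pfaff_equal_rows[OF ch assms(2,3,4) assms(5)[symmetric]])
    (use assms in \<open>auto simp: gram_def polar_diag[OF ch] intro: polar_sym\<close>)

text \<open>Hence the Gram Pfaffian of more than m vectors in an m-dimensional space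
  vanishes, since one of them is a combination of the others.\<close>

lemma pfaff_gram_dependent:
  assumes ch: "CHAR('a::field) = 2" and fin: "finite J" and card: "m < card J"
  shows "pfaff (gram m (b :: nat \<Rightarrow> nat \<Rightarrow> 'a) u) J = 0"
proof -
  obtain i0 c where i0: "i0 \<in> J" and c: "\<forall>k\<in>{1..m}. u i0 k = (\<Sum>l\<in>J - {i0}. c l * u l k)"
    using exists_dependent_member[OF fin card, of u] by blast
  have "pfaff (gram m b u) J = (\<Sum>l\<in>J - {i0}. c l * pfaff (gram m b (u(i0 := u l))) J)"
    by (rule pfaff_gram_lincomb_row[OF fin i0]) (use fin c in auto)
  also have "\<dots> = 0"
    by (rule sum.neutral) (use pfaff_gram_repeated[OF ch fin i0] in auto)
  finally show ?thesis .
qed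

lemma pfaff_gram_minor_ratio:
  assumes ch: "CHAR('a::field) = 2" and fin: "finite J" and i0: "i0 \<in> J"
    and c: "\<forall>k\<in>{1..m}. u i0 k = (\<Sum>l\<in>J - {i0}. c l * u l k)"
    and t: "t \<in> J - {i0}"
  shows "pfaff (gram m (b :: nat \<Rightarrow> nat \<Rightarrow> 'a) u) (J - {t}) = c t * pfaff (gram m b u) (J - {i0})"
proof -
  have swap: "pfaff (gram m b (u(i0 := u t))) (J - {t}) = pfaff (gram m b u) (J - {i0})"
  proof -
    define h where "h x = (if x = t then i0 else x)" for x
    have "h ` (J - {i0}) = J - {t}" using t i0 by (auto simp: h_def image_iff)
    moreover have "pfaff (gram m b (u(i0 := u t))) (h ` (J - {i0})) = pfaff (gram m b u) (J - {i0})"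
    proof (rule pfaff_relabel)
      show "inj_on h (J - {i0})" using t by (auto simp: h_def inj_on_def)
    qed (use fin t in \<open>auto simp: h_def gram_def intro: polar_sym\<close>)
    ultimately show ?thesis by simp
  qed
  have "pfaff (gram m b u) (J - {t}) = (\<Sum>l\<in>J - {i0}. c l * pfaff (gram m b (u(i0 := u l))) (J - {t}))"
    by (rule pfaff_gram_lincomb_row) (use fin c t i0 in auto)
  also have "\<dots> = (\<Sum>l\<in>J - {i0}. if l = t then c t * pfaff (gram m b u) (J - {i0}) else 0)"
    using pfaff_gram_repeated[OF ch, of "J - {t}" i0 _ m b u] fin i0 t swap
    by (intro sum.cong) auto
  also have "\<dots> = c t * pfaff (gram m b u) (J - {i0})" using t fin by simp
  finally show ?thesis .
qed

lemma gram_adj_dependent: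
  assumes ch: "CHAR('a::field) = 2" and fin: "finite J" and card: "m < card J" and k: "k \<in> {1..m}"
  shows "gram_adj m (b :: nat \<Rightarrow> nat \<Rightarrow> 'a) J u k = 0"
proof -
  obtain i0 c where i0: "i0 \<in> J" and c: "\<forall>k\<in>{1..m}. u i0 k = (\<Sum>l\<in>J - {i0}. c l * u l k)"
    using exists_dependent_member[OF fin card, of u] by blast
  define P where "P t = pfaff (gram m b u) (J - {t})" for t
  have "gram_adj m b J u k = P i0 * u i0 k + (\<Sum>t\<in>J - {i0}. P t * u t k)"
    using fin i0 by (simp add: gram_adj_def P_def sum.remove)
  also have "(\<Sum>t\<in>J - {i0}. P t * u t k) = P i0 * (\<Sum>t\<in>J - {i0}. c t * u t k)"
    using pfaff_gram_minor_ratio[OF ch fin i0 c]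
    by (simp add: P_def sum_distrib_left mult.assoc mult.left_commute)
  also have "(\<Sum>t\<in>J - {i0}. c t * u t k) = u i0 k" using c k by simp
  finally show ?thesis using char2_double[OF ch] by simp
qed

section \<open>Vanishing on forms of low rank\<close>

lemma qrank_attained:
  obtains b l where "\<forall>x. qform n a x = qform (qrank n a) b (\<lambda>k. \<Sum>i=1..n. l k i * x i)"
proof -
  have "\<forall>x. qform n a x = qform n a (\<lambda>k. \<Sum>i=1..n. unit_vec i k * x i)"
    by (auto intro!: qform_cong simp: unit_vec_expansion mult.commute)
  then have "\<exists>m (b :: nat \<Rightarrow> nat \<Rightarrow> 'a) (l :: nat \<Rightarrow> nat \<Rightarrow> 'a).
      \<forall>x. qform n a x = qform m b (\<lambda>k. \<Sum>i=1..n. l k i * x i)"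
    by (intro exI[of _ n] exI[of _ a] exI[of _ "\<lambda>k i. unit_vec i k"])
  then have "\<exists>(b :: nat \<Rightarrow> nat \<Rightarrow> 'a) (l :: nat \<Rightarrow> nat \<Rightarrow> 'a).
      \<forall>x. qform n a x = qform (qrank n a) b (\<lambda>k. \<Sum>i=1..n. l k i * x i)"
    unfolding qrank_def by (rule LeastI_ex)
  then show ?thesis using that by blast
qed

lemma gram_transfer:
  assumes "\<forall>x. qform n a x = qform m b (\<lambda>k. \<Sum>i=1..n. l k i * x i)"
  shows "gram n a v = gram m b (\<lambda>t k. \<Sum>i=1..n. l k i * v t i)"
proof (intro ext)
  fix x y
  have "(\<lambda>k. \<Sum>i=1..n. l k i * (v x i + v y i)) =
      (\<lambda>k. (\<Sum>i=1..n. l k i * v x i) + (\<Sum>i=1..n. l k i * v y i))"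
    by (simp add: distrib_left sum.distrib)
  then show "gram n a v x y = gram m b (\<lambda>t k. \<Sum>i=1..n. l k i * v t i) x y"
    unfolding gram_def polar_def using assms by simp
qed

lemma pfaff_gram_low_rank:
  fixes a :: "nat \<Rightarrow> nat \<Rightarrow> 'a::field"
  assumes ch: "CHAR('a) = 2" and fin: "finite J" and rk: "qrank n a < card J"
  shows "pfaff (gram n a v) J = 0"
proof -
  obtain b l where "\<forall>x. qform n a x = qform (qrank n a) b (\<lambda>k. \<Sum>i=1..n. l k i * x i)"
    by (rule qrank_attained)
  then have "gram n a v = gram (qrank n a) b (\<lambda>t k. \<Sum>i=1..n. l k i * v t i)"
    by (rule gram_transfer)
  then show ?thesis using pfaff_gram_dependent[OF ch fin rk] by simp
qed

lemma gram_adj_low_rank: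
  fixes a :: "nat \<Rightarrow> nat \<Rightarrow> 'a::field"
  assumes ch: "CHAR('a) = 2" and fin: "finite J" and rk: "qrank n a < card J"
  shows "qform n a (gram_adj n a J v) = 0"
proof -
  obtain b l where bl: "\<forall>x. qform n a x = qform (qrank n a) b (\<lambda>k. \<Sum>i=1..n. l k i * x i)"
    by (rule qrank_attained)
  define u where "u = (\<lambda>t k. \<Sum>i=1..n. l k i * v t i)"
  have image: "(\<Sum>i=1..n. l k i * gram_adj n a J v i) = gram_adj (qrank n a) b J u k" for k
    unfolding gram_adj_def gram_transfer[OF bl] u_def
    by (simp add: sum_distrib_left sum_distrib_right mult_ac) (rule sum.swap)
  have "qform n a (gram_adj n a J v) =
      qform (qrank n a) b (\<lambda>k. \<Sum>i=1..n. l k i * gram_adj n a J v i)"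
    using bl by blast
  also have "\<dots> = qform (qrank n a) b (\<lambda>k. 0)"
    by (rule qform_cong) (unfold image, rule gram_adj_dependent[OF ch fin rk])
  finally show ?thesis by (simp add: qform_zero)
qed

section \<open>Homogeneous polynomial functions\<close>

definition qmonomial :: "nat \<Rightarrow> ((nat \<times> nat) \<Rightarrow> nat) \<Rightarrow> (nat \<Rightarrow> nat \<Rightarrow> 'a::field) \<Rightarrow> 'a" where
  "qmonomial n e a = (\<Prod>v\<in>qvars n. a (fst v) (snd v) ^ e v)"

definition is_hpoly :: "nat \<Rightarrow> nat \<Rightarrow> ((nat \<Rightarrow> nat \<Rightarrow> 'a::field) \<Rightarrow> 'a) \<Rightarrow> bool" where
  "is_hpoly n d f \<longleftrightarrow> (\<exists>p. homog_poly n d p \<and> (\<forall>a. f a = eval_homog n d p a))"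

lemma finite_qvars: "finite (qvars n)"
  by (rule finite_subset[of _ "{1..n} \<times> {1..n}"]) (auto simp: qvars_def)

lemma finite_hmonos: "finite (hmonos n d)"
proof (rule finite_subset)
  show "hmonos n d \<subseteq> {e. \<forall>v. (v \<in> qvars n \<longrightarrow> e v \<in> {..d}) \<and> (v \<notin> qvars n \<longrightarrow> e v = 0)}"
    using finite_qvars by (auto simp: hmonos_def intro: order.trans[OF member_le_sum])
qed (intro finite_set_of_finite_funs finite_qvars finite_atMost)

lemma finite_homog_polys: "finite {p :: ((nat \<times> nat) \<Rightarrow> nat) \<Rightarrow> 'a::{field,finite}. homog_poly n d p}"
proof (rule finite_subset)
  show "{p :: ((nat \<times> nat) \<Rightarrow> nat) \<Rightarrow> 'a. homog_poly n d p} \<subseteq>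
      {p. \<forall>e. (e \<in> hmonos n d \<longrightarrow> p e \<in> UNIV) \<and> (e \<notin> hmonos n d \<longrightarrow> p e = 0)}"
    by (auto simp: homog_poly_def)
qed (intro finite_set_of_finite_funs finite_hmonos finite_UNIV)

lemma is_hpoly_cong: "is_hpoly n d f \<Longrightarrow> (\<And>a. f a = g a) \<Longrightarrow> d = d' \<Longrightarrow> is_hpoly n d' g"
  by (metis ext)

lemma is_hpoly_monomial:
  assumes "e \<in> hmonos n d"
  shows "is_hpoly n d (\<lambda>a. c * qmonomial n e a)"
  unfolding is_hpoly_def
proof (intro exI conjI allI)
  show "homog_poly n d (\<lambda>e'. if e' = e then c else 0)"
    using assms by (auto simp: homog_poly_def)
  show "c * qmonomial n e a = eval_homog n d (\<lambda>e'. if e' = e then c else 0) a" for a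
  proof -
    have "eval_homog n d (\<lambda>e'. if e' = e then c else 0) a =
        (\<Sum>e'\<in>hmonos n d. if e' = e then c * qmonomial n e a else 0)"
      unfolding eval_homog_def qmonomial_def by (intro sum.cong) auto
    then show ?thesis using assms finite_hmonos by simp
  qed
qed

lemma is_hpoly_add:
  assumes "is_hpoly n d f" "is_hpoly n d g"
  shows "is_hpoly n d (\<lambda>a. f a + g a)"
proof -
  obtain p q where p: "homog_poly n d p" "\<forall>a. f a = eval_homog n d p a"
    and q: "homog_poly n d q" "\<forall>a. g a = eval_homog n d q a"
    using assms unfolding is_hpoly_def by blast
  show ?thesis unfolding is_hpoly_def
  proof (intro exI[of _ "\<lambda>e. p e + q e"] conjI allI)
    show "homog_poly n d (\<lambda>e. p e + q e)"
      using p(1) q(1) unfolding homog_poly_def by (metis add.right_neutral)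
    show "f a + g a = eval_homog n d (\<lambda>e. p e + q e) a" for a
      using p(2) q(2) by (simp add: eval_homog_def sum.distrib distrib_right)
  qed
qed

lemma is_hpoly_sum:
  assumes "finite S" "\<And>s. s \<in> S \<Longrightarrow> is_hpoly n d (f s)"
  shows "is_hpoly n d (\<lambda>a. \<Sum>s\<in>S. f s a)"
  using assms
proof (induction S rule: finite_induct)
  case empty
  show ?case unfolding is_hpoly_def
    by (intro exI[of _ "\<lambda>_. 0"]) (auto simp: homog_poly_def eval_homog_def)
qed (simp add: is_hpoly_add)

lemma is_hpoly_mult:
  assumes "is_hpoly n d1 f" "is_hpoly n d2 g"
  shows "is_hpoly n (d1 + d2) (\<lambda>a. f a * g a)"
proof -
  obtain p where p: "homog_poly n d1 p" "\<forall>a. f a = eval_homog n d1 p a"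
    using assms unfolding is_hpoly_def by blast
  obtain q where q: "homog_poly n d2 q" "\<forall>a. g a = eval_homog n d2 q a"
    using assms unfolding is_hpoly_def by blast
  have monomial_mult: "qmonomial n e1 a * qmonomial n e2 a = qmonomial n (\<lambda>v. e1 v + e2 v) a"
    for e1 e2 a unfolding qmonomial_def by (simp add: prod.distrib power_add)
  have eq: "f a * g a = (\<Sum>e1\<in>hmonos n d1. \<Sum>e2\<in>hmonos n d2.
      (p e1 * q e2) * qmonomial n (\<lambda>v. e1 v + e2 v) a)" for a
    using p(2) q(2) unfolding eval_homog_def qmonomial_def[symmetric]
    by (simp add: sum_product monomial_mult[symmetric] mult_ac)
  have "is_hpoly n (d1 + d2) (\<lambda>a. \<Sum>e1\<in>hmonos n d1. \<Sum>e2\<in>hmonos n d2.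
      (p e1 * q e2) * qmonomial n (\<lambda>v. e1 v + e2 v) a)"
    by (intro is_hpoly_sum finite_hmonos is_hpoly_monomial) (simp add: hmonos_def sum.distrib)
  then show ?thesis by (rule is_hpoly_cong) (simp_all add: eq)
qed

lemma is_hpoly_scale:
  assumes "is_hpoly n d f"
  shows "is_hpoly n d (\<lambda>a. c * f a)"
proof -
  obtain p where p: "homog_poly n d p" "\<forall>a. f a = eval_homog n d p a"
    using assms unfolding is_hpoly_def by blast
  show ?thesis unfolding is_hpoly_def
  proof (intro exI[of _ "\<lambda>e. c * p e"] conjI allI)
    show "homog_poly n d (\<lambda>e. c * p e)"
      using p(1) unfolding homog_poly_def by auto
    show "c * f a = eval_homog n d (\<lambda>e. c * p e) a" for a
      using p(2) by (simp add: eval_homog_def sum_distrib_left mult.assoc)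
  qed
qed

lemma is_hpoly_const: "is_hpoly n 0 (\<lambda>a. c)"
proof -
  have "(\<lambda>_. 0) \<in> hmonos n 0" by (simp add: hmonos_def)
  from is_hpoly_monomial[OF this, of c] show ?thesis
    by (rule is_hpoly_cong) (simp_all add: qmonomial_def)
qed

lemma is_hpoly_var:
  assumes "(i, j) \<in> qvars n"
  shows "is_hpoly n 1 (\<lambda>a::nat \<Rightarrow> nat \<Rightarrow> 'a::field. a i j)"
proof -
  define e where "e = (\<lambda>v. if v = (i, j) then 1 else (0::nat))"
  have e: "e \<in> hmonos n 1" using assms finite_qvars by (simp add: hmonos_def e_def)
  have monomial: "qmonomial n e a = a i j" for a :: "nat \<Rightarrow> nat \<Rightarrow> 'a"
  proof -
    have "qmonomial n e a = (\<Prod>v\<in>qvars n. if v = (i, j) then a (fst v) (snd v) else 1)"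
      unfolding qmonomial_def e_def by (intro prod.cong) auto
    then show ?thesis using assms finite_qvars by simp
  qed
  from is_hpoly_monomial[OF e, of 1] show ?thesis
    by (rule is_hpoly_cong) (simp_all add: monomial)
qed

lemma is_hpoly_power: "is_hpoly n d f \<Longrightarrow> is_hpoly n (k * d) (\<lambda>a. f a ^ k)"
proof (induction k)
  case 0
  then show ?case using is_hpoly_const[of n 1] by simp
next
  case (Suc k)
  from is_hpoly_mult[OF Suc.prems Suc.IH[OF Suc.prems]] show ?case
    by (rule is_hpoly_cong) auto
qed

lemma is_hpoly_polar: "is_hpoly n 1 (\<lambda>a. polar n a x y)"
  unfolding polar_formula
proof (intro is_hpoly_sum)
  fix i j assume "i \<in> {1..n}" "j \<in> {i..n}"
  then have "(i, j) \<in> qvars n" by (auto simp: qvars_def)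
  from is_hpoly_scale[OF is_hpoly_var[OF this], of "x i * y j + y i * x j"]
  show "is_hpoly n 1 (\<lambda>a. a i j * (x i * y j + y i * x j))"
    by (rule is_hpoly_cong) auto
qed auto

lemma is_hpoly_pfaff_gram:
  assumes "finite J"
  shows "is_hpoly n (card J div 2) (\<lambda>a. pfaff (gram n a v) J)"
  using assms
proof (induction "card J" arbitrary: J rule: less_induct)
  case less
  show ?case
  proof (cases "J = {}")
    case True
    then show ?thesis using is_hpoly_const[of n 1] by simp
  next
    case False
    define m where "m = Min J"
    have mJ: "m \<in> J" using False less.prems unfolding m_def by simp
    have "is_hpoly n (card J div 2) (\<lambda>a. \<Sum>j\<in>J - {m}. gram n a v m j * pfaff (gram n a v) (J - {m, j}))"
    proof (intro is_hpoly_sum)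
      fix j assume j: "j \<in> J - {m}"
      have "card (J - {m, j}) < card J"
        using less.prems mJ j by (intro psubset_card_mono) auto
      then have "is_hpoly n (card (J - {m, j}) div 2) (\<lambda>a. pfaff (gram n a v) (J - {m, j}))"
        using less.prems by (intro less.hyps) auto
      from is_hpoly_mult[OF is_hpoly_polar this, of "v m" "v j"]
      show "is_hpoly n (card J div 2) (\<lambda>a. gram n a v m j * pfaff (gram n a v) (J - {m, j}))"
      proof (rule is_hpoly_cong)
        have sub: "{m, j} \<subseteq> J" using mJ j by auto
        then have "card (J - {m, j}) + 2 = card J"
          using card_mono[OF less.prems sub] j by (simp add: card_Diff_subset)
        then show "1 + card (J - {m, j}) div 2 = card J div 2" by presburger
      qed (simp add: gram_def)
    qed (use less.prems in auto)
    then show ?thesis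
      by (rule is_hpoly_cong) (simp_all add: m_def pfaff_rec[OF less.prems False])
  qed
qed

lemma is_hpoly_gram_adj:
  assumes "finite J" "\<And>t. t \<in> J \<Longrightarrow> card (J - {t}) div 2 = d"
  shows "is_hpoly n d (\<lambda>a. gram_adj n a J v k)"
  unfolding gram_adj_def
proof (rule is_hpoly_sum[OF assms(1)])
  fix t assume t: "t \<in> J"
  have "is_hpoly n (card (J - {t}) div 2) (\<lambda>a. v t k * pfaff (gram n a v) (J - {t}))"
    using is_hpoly_scale[OF is_hpoly_pfaff_gram[of "J - {t}" n v]] assms(1) by simp
  then show "is_hpoly n d (\<lambda>a. pfaff (gram n a v) (J - {t}) * v t k)"
    by (rule is_hpoly_cong) (auto simp: mult.commute assms(2)[OF t])
qed

lemma is_hpoly_qform_gram_adj: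
  assumes "finite J" "\<And>t. t \<in> J \<Longrightarrow> card (J - {t}) div 2 = d"
  shows "is_hpoly n (1 + d + d) (\<lambda>a. qform n a (gram_adj n a J v))"
  unfolding qform_def
proof (intro is_hpoly_sum)
  fix i j assume "i \<in> {1..n}" "j \<in> {i..n}"
  then have ij: "(i, j) \<in> qvars n" by (auto simp: qvars_def)
  show "is_hpoly n (1 + d + d) (\<lambda>a. a i j * gram_adj n a J v i * gram_adj n a J v j)"
    by (intro is_hpoly_mult is_hpoly_var[OF ij] is_hpoly_gram_adj[OF assms])
qed auto

section \<open>Symplectic families\<close>

text \<open>A symplectic family of size s: pairs (e i, f i) with polar e_i f_j = delta_ij and all
  other pairings zero; sympl_proj is the orthogonal projection onto its complement.\<close>

definition symplectic ::
    "nat \<Rightarrow> (nat \<Rightarrow> nat \<Rightarrow> 'a::field) \<Rightarrow> nat \<Rightarrow> (nat \<Rightarrow> nat \<Rightarrow> 'a) \<Rightarrow> (nat \<Rightarrow> nat \<Rightarrow> 'a) \<Rightarrow> bool" where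
  "symplectic n a s e f \<longleftrightarrow> (\<forall>i<s. \<forall>j<s. polar n a (e i) (f j) = (if i = j then 1 else 0) \<and>
      polar n a (e i) (e j) = 0 \<and> polar n a (f i) (f j) = 0)"

definition sympl_proj ::
    "nat \<Rightarrow> (nat \<Rightarrow> nat \<Rightarrow> 'a::field) \<Rightarrow> nat \<Rightarrow> (nat \<Rightarrow> nat \<Rightarrow> 'a) \<Rightarrow> (nat \<Rightarrow> nat \<Rightarrow> 'a) \<Rightarrow>
      (nat \<Rightarrow> 'a) \<Rightarrow> nat \<Rightarrow> 'a" where
  "sympl_proj n a s e f x =
    (\<lambda>k. x k - (\<Sum>i<s. polar n a x (f i) * e i k + polar n a x (e i) * f i k))"

lemma polar_pair: "polar n a (\<lambda>k. c * u k + d * w k) z = c * polar n a u z + d * polar n a w z"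
  using polar_add[of n a "\<lambda>k. c * u k" "\<lambda>k. d * w k" z] by (simp add: polar_smult)

lemma polar_sympl_proj:
  "polar n a (sympl_proj n a s e f x) z = polar n a x z -
    (\<Sum>i<s. polar n a x (f i) * polar n a (e i) z + polar n a x (e i) * polar n a (f i) z)"
  unfolding sympl_proj_def by (simp add: polar_diff polar_sum polar_pair)

lemma sympl_proj_orth:
  assumes "symplectic n a s e f" "j < s"
  shows "polar n a (sympl_proj n a s e f x) (e j) = 0"
    and "polar n a (sympl_proj n a s e f x) (f j) = 0"
proof -
  have "(\<Sum>i<s. polar n a x (f i) * polar n a (e i) (e j) + polar n a x (e i) * polar n a (f i) (e j)) =
      (\<Sum>i<s. if i = j then polar n a x (e j) else 0)"
    using assms polar_sym[of n a "f _" "e j"] unfolding symplectic_def by (intro sum.cong) auto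
  then show "polar n a (sympl_proj n a s e f x) (e j) = 0"
    using assms(2) by (simp add: polar_sympl_proj)
  have "(\<Sum>i<s. polar n a x (f i) * polar n a (e i) (f j) + polar n a x (e i) * polar n a (f i) (f j)) =
      (\<Sum>i<s. if i = j then polar n a x (f j) else 0)"
    using assms unfolding symplectic_def by (intro sum.cong) auto
  then show "polar n a (sympl_proj n a s e f x) (f j) = 0"
    using assms(2) by (simp add: polar_sympl_proj)
qed

lemma symplectic_extend:
  fixes a :: "nat \<Rightarrow> nat \<Rightarrow> 'a::field"
  assumes ch: "CHAR('a) = 2" and sy: "symplectic n a s e f"
    and nondeg: "polar n a (sympl_proj n a s e f x) (sympl_proj n a s e f y) \<noteq> 0"
  defines "c \<equiv> polar n a (sympl_proj n a s e f x) (sympl_proj n a s e f y)"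
  shows "symplectic n a (Suc s) (e(s := sympl_proj n a s e f x))
    (f(s := (\<lambda>k. inverse c * sympl_proj n a s e f y k)))"
proof -
  define x' where "x' = sympl_proj n a s e f x"
  define y' where "y' = (\<lambda>k. inverse c * sympl_proj n a s e f y k)"
  have orth: "polar n a x' (e j) = 0" "polar n a x' (f j) = 0"
      "polar n a y' (e j) = 0" "polar n a y' (f j) = 0" if "j < s" for j
    using sympl_proj_orth[OF sy that] by (simp_all add: x'_def y'_def polar_smult)
  have xy: "polar n a x' y' = 1" using nondeg by (simp add: x'_def y'_def polar_smult_right c_def)
  have "polar n a ((e(s := x')) i) ((f(s := y')) j) = (if i = j then 1 else 0) \<and>
      polar n a ((e(s := x')) i) ((e(s := x')) j) = 0 \<and>
      polar n a ((f(s := y')) i) ((f(s := y')) j) = 0" if i: "i < Suc s" and j: "j < Suc s" for i j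
  proof (cases "i = s"; cases "j = s")
    assume "i = s" "j = s"
    then show ?thesis using xy by (simp add: polar_diag[OF ch])
  next
    assume "i = s" "j \<noteq> s"
    then show ?thesis using orth[of j] j by simp
  next
    assume "i \<noteq> s" "j = s"
    then show ?thesis using orth[of i] i
      by (simp add: polar_sym[of n a "e i"] polar_sym[of n a "f i"])
  next
    assume "i \<noteq> s" "j \<noteq> s"
    then show ?thesis using sy i j unfolding symplectic_def by simp
  qed
  then show ?thesis unfolding symplectic_def x'_def y'_def by blast
qed

lemma symplectic_or_isotropic_residual:
  fixes a :: "nat \<Rightarrow> nat \<Rightarrow> 'a::field"
  assumes ch: "CHAR('a) = 2"
  shows "(\<exists>e f. symplectic n a s e f) \<or>
    (\<exists>s'<s. \<exists>e f. symplectic n a s' e f \<and>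
      (\<forall>x y. polar n a (sympl_proj n a s' e f x) (sympl_proj n a s' e f y) = 0))"
proof (induction s)
  case 0
  have "symplectic n a 0 e f" for e f by (simp add: symplectic_def)
  then show ?case by blast
next
  case (Suc s)
  show ?case
  proof (cases "\<exists>e f. symplectic n a s e f \<and>
      (\<forall>x y. polar n a (sympl_proj n a s e f x) (sympl_proj n a s e f y) = 0)")
    case True
    then show ?thesis by blast
  next
    case False
    show ?thesis
    proof (cases "\<exists>e f. symplectic n a s e f")
      case True
      with False obtain e f x y where "symplectic n a s e f"
        "polar n a (sympl_proj n a s e f x) (sympl_proj n a s e f y) \<noteq> 0" by blast
      then show ?thesis using symplectic_extend[OF ch] by blast
    next
      case False
      then show ?thesis using Suc.IH less_SucI by blast
    qed
  qed
qed

lemma qform_pair: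
  assumes "polar n a u w = 1"
  shows "qform n a (\<lambda>k. c * u k + d * w k) = c ^ 2 * qform n a u + c * d + d ^ 2 * qform n a w"
  using assms by (simp add: qform_add qform_smult polar_smult polar_smult_right)

lemma qform_sympl_decomp:
  assumes sy: "symplectic n a s e f"
  shows "qform n a x = (\<Sum>i<s. qform n a (e i) * (polar n a x (f i))\<^sup>2 +
      polar n a x (f i) * polar n a x (e i) + qform n a (f i) * (polar n a x (e i))\<^sup>2) +
    qform n a (sympl_proj n a s e f x)"
proof -
  define w where "w i = (\<lambda>k. polar n a x (f i) * e i k + polar n a x (e i) * f i k)" for i
  define x' where "x' = sympl_proj n a s e f x"
  have x: "x = (\<lambda>k. x' k + (\<Sum>i<s. w i k))"
    by (simp add: x'_def sympl_proj_def w_def)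
  have orth_w: "polar n a (w i) z = 0"
    if "i < s" "polar n a (e i) z = 0" "polar n a (f i) z = 0" for i z
    using that by (simp add: w_def polar_pair)
  have block: "qform n a (w i) = qform n a (e i) * (polar n a x (f i))\<^sup>2 +
      polar n a x (f i) * polar n a x (e i) + qform n a (f i) * (polar n a x (e i))\<^sup>2"
    if "i < s" for i
    unfolding w_def using sy that by (subst qform_pair) (auto simp: symplectic_def mult_ac)
  have "polar n a x' (\<lambda>k. \<Sum>i<s. w i k) = (\<Sum>i<s. polar n a (w i) x')"
    by (simp add: polar_sym[of n a x'] polar_sum)
  also have "\<dots> = 0"
  proof (intro sum.neutral ballI orth_w)
    fix i assume "i \<in> {..<s}"
    then show "i < s" "polar n a (e i) x' = 0" "polar n a (f i) x' = 0"
      using sympl_proj_orth[OF sy, of i x]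
      by (simp_all add: x'_def polar_sym[of n a "e i"] polar_sym[of n a "f i"])
  qed
  finally have "qform n a x = qform n a x' + qform n a (\<lambda>k. \<Sum>i<s. w i k)"
    by (subst x) (simp add: qform_add)
  also have "qform n a (\<lambda>k. \<Sum>i<s. w i k) = (\<Sum>i<s. qform n a (w i))"
  proof (rule qform_sum_orth)
    fix i j assume "i \<in> {..<s}" "j \<in> {..<s}" "i \<noteq> j"
    then have "polar n a (w j) (e i) = 0" "polar n a (w j) (f i) = 0"
      using sy polar_sym[of n a "f j" "e i"] by (auto simp: symplectic_def w_def polar_pair)
    then show "polar n a (w i) (w j) = 0"
      using \<open>i \<in> {..<s}\<close> by (intro orth_w) (simp_all add: polar_sym[of n a _ "w j"])
  qed simp
  also have "(\<Sum>i<s. qform n a (w i)) = (\<Sum>i<s. qform n a (e i) * (polar n a x (f i))\<^sup>2 +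
      polar n a x (f i) * polar n a x (e i) + qform n a (f i) * (polar n a x (e i))\<^sup>2)"
    using block by (intro sum.cong) auto
  finally show ?thesis by (simp add: x'_def add.commute)
qed

lemma frobenius_form_is_square:
  fixes Q :: "(nat \<Rightarrow> 'a::{field,finite}) \<Rightarrow> 'a"
  assumes ch: "CHAR('a) = 2"
    and add: "\<And>x y. Q (\<lambda>k. x k + y k) = Q x + Q y"
    and smult: "\<And>c x. Q (\<lambda>k. c * x k) = c ^ 2 * Q x"
    and local: "\<And>x y. (\<And>k. k \<in> {1..n} \<Longrightarrow> x k = y k) \<Longrightarrow> Q x = Q y"
  shows "\<exists>r. \<forall>x. Q x = (\<Sum>p=1..n. r p * x p) ^ 2"
proof -
  have zero: "Q (\<lambda>k. 0) = 0" using smult[of 0 "\<lambda>k. 0"] by simp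
  have sum: "Q (\<lambda>k. \<Sum>l\<in>L. w l k) = (\<Sum>l\<in>L. Q (w l))" if "finite L" for L w
    using that by (induction L rule: finite_induct) (simp_all add: zero add)
  define r where "r p = (SOME r. r ^ 2 = Q (unit_vec p))" for p
  have r: "r p ^ 2 = Q (unit_vec p)" for p
    unfolding r_def by (rule someI_ex) (rule char2_square_root[OF ch])
  have "Q x = (\<Sum>p=1..n. r p * x p) ^ 2" for x
  proof -
    have "Q x = Q (\<lambda>k. \<Sum>p=1..n. x p * unit_vec p k)"
      by (rule local) (rule unit_vec_expansion)
    also have "\<dots> = (\<Sum>p=1..n. (r p * x p) ^ 2)"
      by (simp add: sum smult r power_mult_distrib mult.commute)
    also have "\<dots> = (\<Sum>p=1..n. r p * x p) ^ 2"
      by (rule char2_square_sum[OF ch, symmetric]) simp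
    finally show ?thesis .
  qed
  then show ?thesis by blast
qed

lemma sympl_proj_add:
  "sympl_proj n a s e f (\<lambda>k. x k + y k) = (\<lambda>k. sympl_proj n a s e f x k + sympl_proj n a s e f y k)"
  unfolding sympl_proj_def by (rule ext) (simp add: polar_add sum.distrib algebra_simps)

lemma sympl_proj_smult: "sympl_proj n a s e f (\<lambda>k. c * x k) = (\<lambda>k. c * sympl_proj n a s e f x k)"
  unfolding sympl_proj_def by (rule ext) (simp add: polar_smult sum_distrib_left algebra_simps)

lemma residual_is_square:
  fixes a :: "nat \<Rightarrow> nat \<Rightarrow> 'a::{field,finite}"
  assumes ch: "CHAR('a) = 2"
    and iso: "\<And>x y. polar n a (sympl_proj n a s e f x) (sympl_proj n a s e f y) = 0"
  shows "\<exists>r. \<forall>x. qform n a (sympl_proj n a s e f x) = (\<Sum>p=1..n. r p * x p) ^ 2"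
proof (rule frobenius_form_is_square[OF ch])
  show "qform n a (sympl_proj n a s e f (\<lambda>k. x k + y k)) =
      qform n a (sympl_proj n a s e f x) + qform n a (sympl_proj n a s e f y)" for x y
    by (simp add: sympl_proj_add qform_add iso)
  show "qform n a (sympl_proj n a s e f (\<lambda>k. c * x k)) = c ^ 2 * qform n a (sympl_proj n a s e f x)"
    for c x by (simp add: sympl_proj_smult qform_smult)
  show "qform n a (sympl_proj n a s e f x) = qform n a (sympl_proj n a s e f y)"
    if "\<And>k. k \<in> {1..n} \<Longrightarrow> x k = y k" for x y
    using that polar_cong[OF that] by (intro qform_cong) (simp add: sympl_proj_def)
qed

section \<open>Factoring through few linear forms\<close>

text \<open>F factors through m linear forms; linform is the linear form with coefficients
  alpha; block_diag is the coefficient array of an orthogonal sum of two forms.\<close>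

definition factors_through :: "nat \<Rightarrow> nat \<Rightarrow> ((nat \<Rightarrow> 'a::field) \<Rightarrow> 'a) \<Rightarrow> bool" where
  "factors_through n m F \<longleftrightarrow> (\<exists>(b :: nat \<Rightarrow> nat \<Rightarrow> 'a) (l :: nat \<Rightarrow> nat \<Rightarrow> 'a).
      \<forall>x. F x = qform m b (\<lambda>k. \<Sum>i=1..n. l k i * x i))"

definition linform :: "nat \<Rightarrow> (nat \<Rightarrow> 'a::field) \<Rightarrow> (nat \<Rightarrow> 'a) \<Rightarrow> 'a" where
  "linform n \<alpha> x = (\<Sum>i=1..n. \<alpha> i * x i)"

definition block_diag :: "nat \<Rightarrow> (nat \<Rightarrow> nat \<Rightarrow> 'a::field) \<Rightarrow> (nat \<Rightarrow> nat \<Rightarrow> 'a) \<Rightarrow> nat \<Rightarrow> nat \<Rightarrow> 'a" where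
  "block_diag m1 b1 b2 = (\<lambda>i j. if j \<le> m1 then b1 i j else if m1 < i then b2 (i - m1) (j - m1) else 0)"

lemma qrank_le: "factors_through n m (qform n a) \<Longrightarrow> qrank n a \<le> m"
  unfolding factors_through_def qrank_def by (rule Least_le) auto

lemma factors_through_cong: "factors_through n m F \<Longrightarrow> (\<And>x. F x = G x) \<Longrightarrow> factors_through n m G"
  unfolding factors_through_def by auto

lemma factors_through_zero: "factors_through n 0 (\<lambda>x. 0)"
  unfolding factors_through_def qform_def by simp

lemma factors_through_square: "factors_through n 1 (\<lambda>x. (linform n \<alpha> x) ^ 2)"
  unfolding factors_through_def
  by (intro exI[of _ "\<lambda>i j. 1"] exI[of _ "\<lambda>k. \<alpha>"]) (simp add: qform_def linform_def power2_eq_square)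

lemma factors_through_pair:
  "factors_through n 2 (\<lambda>x. c1 * (linform n \<alpha> x) ^ 2 + linform n \<alpha> x * linform n \<beta> x +
     c2 * (linform n \<beta> x) ^ 2)"
proof -
  define b where "b i j = (if i = 1 \<and> j = 1 then c1 else if i = 1 \<and> j = 2 then 1
    else if i = 2 \<and> j = 2 then c2 else 0)" for i j :: nat
  have "{1..2::nat} = {1, 2}" "{2..2::nat} = {2}" by auto
  then have "qform 2 b y = c1 * y 1 * y 1 + y 1 * y 2 + c2 * y 2 * y 2" for y
    unfolding qform_def by (simp add: b_def)
  then show ?thesis unfolding factors_through_def
    by (intro exI[of _ b] exI[of _ "\<lambda>k. if k = 1 then \<alpha> else \<beta>"])
      (simp add: linform_def power2_eq_square algebra_simps)
qed

lemma qform_block_diag: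
  "qform (m1 + m2) (block_diag m1 b1 b2) y = qform m1 b1 y + qform m2 b2 (\<lambda>k. y (k + m1))"
proof -
  let ?b = "block_diag m1 b1 b2"
  have upper: "(\<Sum>j=i..m1 + m2. ?b i j * y i * y j) = (\<Sum>j=i..m1. b1 i j * y i * y j)"
    if i: "i \<in> {1..m1}" for i
  proof -
    have "(\<Sum>j=i..m1 + m2. ?b i j * y i * y j) =
        (\<Sum>j=i..m1. ?b i j * y i * y j) + (\<Sum>j=m1 + 1..m1 + m2. ?b i j * y i * y j)"
      by (rule sum.ub_add_nat) (use i in auto)
    also have "(\<Sum>j=m1 + 1..m1 + m2. ?b i j * y i * y j) = 0"
      using i by (intro sum.neutral) (auto simp: block_diag_def)
    finally show ?thesis by (simp add: block_diag_def)
  qed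
  have lower: "(\<Sum>i=m1 + 1..m1 + m2. \<Sum>j=i..m1 + m2. ?b i j * y i * y j) =
      (\<Sum>i=1..m2. \<Sum>j=i..m2. b2 i j * y (i + m1) * y (j + m1))"
  proof -
    have "(\<Sum>i=m1 + 1..m1 + m2. \<Sum>j=i..m1 + m2. ?b i j * y i * y j) =
        (\<Sum>i=1..m2. \<Sum>j=i + m1..m2 + m1. ?b (i + m1) j * y (i + m1) * y j)"
      using sum.shift_bounds_cl_nat_ivl[of _ 1 m1 m2] by (simp add: add.commute)
    also have "\<dots> = (\<Sum>i=1..m2. \<Sum>j=i..m2. ?b (i + m1) (j + m1) * y (i + m1) * y (j + m1))"
      by (rule sum.cong[OF refl]) (rule sum.shift_bounds_cl_nat_ivl)
    also have "\<dots> = (\<Sum>i=1..m2. \<Sum>j=i..m2. b2 i j * y (i + m1) * y (j + m1))"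
      by (intro sum.cong refl) (simp add: block_diag_def)
    finally show ?thesis .
  qed
  have "qform (m1 + m2) ?b y = (\<Sum>i=1..m1. \<Sum>j=i..m1 + m2. ?b i j * y i * y j) +
      (\<Sum>i=m1 + 1..m1 + m2. \<Sum>j=i..m1 + m2. ?b i j * y i * y j)"
    unfolding qform_def by (rule sum.ub_add_nat) simp
  then show ?thesis unfolding lower by (simp add: upper qform_def)
qed

lemma factors_through_add:
  assumes "factors_through n m1 F" "factors_through n m2 G"
  shows "factors_through n (m1 + m2) (\<lambda>x. F x + G x)"
proof -
  obtain b1 l1 where 1: "\<And>x. F x = qform m1 b1 (\<lambda>k. \<Sum>i=1..n. l1 k i * x i)"
    using assms(1) unfolding factors_through_def by blast
  obtain b2 l2 where 2: "\<And>x. G x = qform m2 b2 (\<lambda>k. \<Sum>i=1..n. l2 k i * x i)"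
    using assms(2) unfolding factors_through_def by blast
  define l where "l k = (if k \<le> m1 then l1 k else l2 (k - m1))" for k
  have "F x + G x = qform (m1 + m2) (block_diag m1 b1 b2) (\<lambda>k. \<Sum>i=1..n. l k i * x i)" for x
    unfolding qform_block_diag 1 2 by (intro arg_cong2[where f = "(+)"] qform_cong) (auto simp: l_def)
  then show ?thesis unfolding factors_through_def by blast
qed

lemma factors_through_sum:
  assumes "\<And>i. i < s \<Longrightarrow> factors_through n 2 (F i)"
  shows "factors_through n (2 * s) (\<lambda>x. \<Sum>i<s. F i x)"
  using assms
proof (induction s)
  case 0
  then show ?case using factors_through_zero by simp
next
  case (Suc s)
  have "factors_through n (2 * s + 2) (\<lambda>x. (\<Sum>i<s. F i x) + F s x)"
    by (rule factors_through_add) (use Suc in auto)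
  then show ?case by simp
qed

lemma polar_linform: "polar n a x z = linform n (\<lambda>p. polar n a (unit_vec p) z) x"
  unfolding linform_def
  by (subst polar_lincomb[where L = "{1..n}"]) (auto simp: unit_vec_expansion mult.commute)

section \<open>Structure of forms of high rank\<close>

lemma qrank_le_sympl_residual:
  fixes a :: "nat \<Rightarrow> nat \<Rightarrow> 'a::{field,finite}"
  assumes ch: "CHAR('a) = 2" and sy: "symplectic n a s e f"
    and iso: "\<And>x y. polar n a (sympl_proj n a s e f x) (sympl_proj n a s e f y) = 0"
  shows "qrank n a \<le> 2 * s + 1"
    and "(\<And>x. qform n a (sympl_proj n a s e f x) = 0) \<Longrightarrow> qrank n a \<le> 2 * s"
proof -
  define blocks where "blocks x = (\<Sum>i<s. qform n a (e i) * (polar n a x (f i))\<^sup>2 +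
      polar n a x (f i) * polar n a x (e i) + qform n a (f i) * (polar n a x (e i))\<^sup>2)" for x
  have decomp: "qform n a x = blocks x + qform n a (sympl_proj n a s e f x)" for x
    unfolding blocks_def by (rule qform_sympl_decomp[OF sy])
  have blocks: "factors_through n (2 * s) blocks"
    unfolding blocks_def
  proof (rule factors_through_sum)
    fix i
    let ?\<alpha> = "\<lambda>p. polar n a (unit_vec p) (f i)" and ?\<beta> = "\<lambda>p. polar n a (unit_vec p) (e i)"
    from factors_through_pair[of n "qform n a (e i)" ?\<alpha> ?\<beta> "qform n a (f i)"]
    show "factors_through n 2 (\<lambda>x. qform n a (e i) * (polar n a x (f i))\<^sup>2 +
        polar n a x (f i) * polar n a x (e i) + qform n a (f i) * (polar n a x (e i))\<^sup>2)"
      by (rule factors_through_cong) (simp only: polar_linform[symmetric])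
  qed
  obtain r where r: "\<And>x. qform n a (sympl_proj n a s e f x) = (linform n r x) ^ 2"
    using residual_is_square[OF ch iso] unfolding linform_def by blast
  have "factors_through n (2 * s + 1) (qform n a)"
    using factors_through_add[OF blocks factors_through_square, of r]
    by (rule factors_through_cong) (subst decomp, simp add: r)
  then show "qrank n a \<le> 2 * s + 1" by (rule qrank_le)
  assume zero: "\<And>x. qform n a (sympl_proj n a s e f x) = 0"
  have "factors_through n (2 * s) (qform n a)"
    using blocks by (rule factors_through_cong) (subst decomp, simp add: zero)
  then show "qrank n a \<le> 2 * s" by (rule qrank_le)
qed

lemma high_rank_structure:
  fixes a :: "nat \<Rightarrow> nat \<Rightarrow> 'a::{field,finite}"
  assumes ch: "CHAR('a) = 2" and rk: "\<not> qrank n a \<le> 2 * k"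
  shows "(\<exists>e f. symplectic n a (k + 1) e f) \<or>
    (\<exists>e f z. symplectic n a k e f \<and> (\<forall>j<k. polar n a z (e j) = 0 \<and> polar n a z (f j) = 0) \<and>
      qform n a z \<noteq> 0)"
proof (cases "\<exists>e f. symplectic n a (k + 1) e f")
  case False
  then obtain s e f where "s < k + 1" and sy: "symplectic n a s e f"
    and iso: "\<And>x y. polar n a (sympl_proj n a s e f x) (sympl_proj n a s e f y) = 0"
    using symplectic_or_isotropic_residual[OF ch, of n a "k + 1"] by blast
  moreover obtain x where "qform n a (sympl_proj n a s e f x) \<noteq> 0"
    using qrank_le_sympl_residual(2)[OF ch sy iso] rk \<open>s < k + 1\<close> by fastforce
  moreover have "s = k"
    using qrank_le_sympl_residual(1)[OF ch sy iso] rk \<open>s < k + 1\<close> by linarith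
  ultimately show ?thesis using sympl_proj_orth[OF sy] by blast
qed simp

section \<open>Separating polynomials\<close>

definition sympl_seq :: "(nat \<Rightarrow> nat \<Rightarrow> 'a) \<Rightarrow> (nat \<Rightarrow> nat \<Rightarrow> 'a) \<Rightarrow> nat \<Rightarrow> nat \<Rightarrow> 'a" where
  "sympl_seq e f t = (if even t then e (t div 2) else f (t div 2))"

lemma pfaff_gram_standard:
  assumes sy: "symplectic n a s e f" and v: "\<And>t. t < 2 * s \<Longrightarrow> v t = sympl_seq e f t"
  shows "t + r \<le> s \<Longrightarrow> pfaff (gram n a v) {2 * t..<2 * t + 2 * r} = 1"
proof (induction r arbitrary: t)
  case (Suc r)
  define J where "J = {2 * t..<2 * t + 2 * Suc r}"
  have entry: "gram n a v (2 * t) j = (if j = 2 * t + 1 then 1 else 0)" if "j \<in> J - {2 * t}" for j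
    using sy that Suc.prems unfolding gram_def symplectic_def
    by (auto simp: J_def v sympl_seq_def)
  have "Min J = 2 * t" unfolding J_def by (rule Min_eqI) auto
  then have "pfaff (gram n a v) J = (\<Sum>j\<in>J - {2 * t}. gram n a v (2 * t) j * pfaff (gram n a v) (J - {2 * t, j}))"
    using pfaff_rec[of J] by (simp add: J_def)
  also have "\<dots> = (\<Sum>j\<in>J - {2 * t}. if j = 2 * t + 1 then pfaff (gram n a v) (J - {2 * t, j}) else 0)"
    by (rule sum.cong) (simp_all add: entry)
  also have "\<dots> = pfaff (gram n a v) (J - {2 * t, 2 * t + 1})"
    by (simp add: J_def)
  also have "J - {2 * t, 2 * t + 1} = {2 * (t + 1)..<2 * (t + 1) + 2 * r}" by (auto simp: J_def)
  also have "pfaff (gram n a v) \<dots> = 1" by (rule Suc.IH) (use Suc.prems in simp)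
  finally show ?case by (simp add: J_def)
qed simp

lemma separating_poly_even:
  fixes a :: "nat \<Rightarrow> nat \<Rightarrow> 'a::field"
  assumes ch: "CHAR('a) = 2" and sy: "symplectic n a (k + 1) e f"
  shows "\<exists>g. is_hpoly n (k + 1) g \<and> (\<forall>a'. qrank n a' \<le> 2 * k \<longrightarrow> g a' = 0) \<and> g a \<noteq> 0"
proof (intro exI conjI allI impI)
  define J where "J = {0..<2 * (k + 1)}"
  have cJ: "card J = 2 * k + 2" by (simp add: J_def)
  show "is_hpoly n (k + 1) (\<lambda>a'. pfaff (gram n a' (sympl_seq e f)) J)"
    using is_hpoly_pfaff_gram[of J n] cJ by (simp add: J_def)
  show "pfaff (gram n a' (sympl_seq e f)) J = 0" if "qrank n a' \<le> 2 * k" for a' :: "nat \<Rightarrow> nat \<Rightarrow> 'a"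
    using pfaff_gram_low_rank[OF ch, of J n a'] that cJ by (simp add: J_def)
  show "pfaff (gram n a (sympl_seq e f)) J \<noteq> 0"
    using pfaff_gram_standard[OF sy, of "sympl_seq e f" 0 "k + 1"] by (simp add: J_def)
qed

lemma separating_poly_odd:
  fixes a :: "nat \<Rightarrow> nat \<Rightarrow> 'a::field"
  assumes ch: "CHAR('a) = 2" and sy: "symplectic n a k e f"
    and orth: "\<And>j. j < k \<Longrightarrow> polar n a z (e j) = 0 \<and> polar n a z (f j) = 0"
    and qz: "qform n a z \<noteq> 0"
  shows "\<exists>g. is_hpoly n (2 * k + 1) g \<and> (\<forall>a'. qrank n a' \<le> 2 * k \<longrightarrow> g a' = 0) \<and> g a \<noteq> 0"
proof -
  define v where "v t = (if t < 2 * k then sympl_seq e f t else z)" for t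
  define J where "J = {0..<2 * k + 1}"
  have fJ: "finite J" and cJ: "card J = 2 * k + 1" by (simp_all add: J_def)
  have minor: "pfaff (gram n a v) (J - {t}) = (if t = 2 * k then 1 else 0)" if t: "t \<in> J" for t
  proof (cases "t = 2 * k")
    case True
    then have "J - {t} = {2 * 0..<2 * 0 + 2 * k}" by (auto simp: J_def)
    then show ?thesis using pfaff_gram_standard[OF sy, of v 0 k] True by (simp add: v_def)
  next
    case False
    have "pfaff (gram n a v) (J - {t}) = 0"
    proof (rule pfaff_zero_row)
      show "gram n a v (2 * k) y = 0" if "y \<in> J - {t}" for y
        using that orth[of "y div 2"] polar_diag[OF ch, of n a z]
        by (cases "y < 2 * k") (auto simp: gram_def v_def sympl_seq_def J_def)
    qed (use fJ False gram_sym in \<open>auto simp: J_def\<close>)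
    then show ?thesis using False by simp
  qed
  have "gram_adj n a J v = z"
  proof
    fix p
    have "gram_adj n a J v p = (\<Sum>t\<in>J. if t = 2 * k then v t p else 0)"
      unfolding gram_adj_def by (intro sum.cong refl) (simp add: minor)
    then show "gram_adj n a J v p = z p" using fJ by (simp add: J_def v_def)
  qed
  moreover have "is_hpoly n (2 * k + 1) (\<lambda>a'. qform n a' (gram_adj n a' J v))"
    using is_hpoly_qform_gram_adj[OF fJ, of k n v] fJ cJ by (simp add: mult_2)
  moreover have "qform n a' (gram_adj n a' J v) = 0" if "qrank n a' \<le> 2 * k" for a' :: "nat \<Rightarrow> nat \<Rightarrow> 'a"
    using gram_adj_low_rank[OF ch fJ] that cJ by simp
  ultimately show ?thesis using qz by blast
qed

lemma nonzero_coefficient: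
  assumes "\<not> qrank n a \<le> R"
  shows "\<exists>i j. (i, j) \<in> qvars n \<and> a i j \<noteq> 0"
proof (rule ccontr)
  assume "\<not> ?thesis"
  then have "qform n a x = 0" for x
    unfolding qform_def by (intro sum.neutral ballI) (auto simp: qvars_def)
  then have "factors_through n 0 (qform n a)" using factors_through_cong[OF factors_through_zero] by metis
  then show False using qrank_le assms by fastforce
qed

lemma separating_poly_pad:
  assumes "is_hpoly n d g" "d \<le> D" "(i, j) \<in> qvars n"
  shows "is_hpoly n D (\<lambda>a. g a * a i j ^ (D - d))"
  using is_hpoly_mult[OF assms(1) is_hpoly_power[OF is_hpoly_var[OF assms(3)]]]
  by (rule is_hpoly_cong) (use assms(2) in auto)

lemma separating_poly:
  fixes a :: "nat \<Rightarrow> nat \<Rightarrow> 'a::{field,finite}"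
  assumes ch: "CHAR('a) = 2" and rk: "\<not> qrank n a \<le> 2 * k"
  shows "\<exists>g. is_hpoly n (2 * k + 1) g \<and> (\<forall>a'. qrank n a' \<le> 2 * k \<longrightarrow> g a' = 0) \<and> g a \<noteq> 0"
proof -
  obtain i j where ij: "(i, j) \<in> qvars n" "a i j \<noteq> 0" using nonzero_coefficient[OF rk] by blast
  have "\<exists>d g. d \<le> 2 * k + 1 \<and> is_hpoly n d g \<and>
      (\<forall>a'. qrank n a' \<le> 2 * k \<longrightarrow> g a' = 0) \<and> g a \<noteq> 0"
    using high_rank_structure[OF ch rk]
  proof
    assume "\<exists>e f. symplectic n a (k + 1) e f"
    then show ?thesis using separating_poly_even[OF ch] by (metis add_le_mono1 le_add2 mult_2)
  next
    assume "\<exists>e f z. symplectic n a k e f \<and> (\<forall>j<k. polar n a z (e j) = 0 \<and> polar n a z (f j) = 0) \<and>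
      qform n a z \<noteq> 0"
    then show ?thesis using separating_poly_odd[OF ch] by blast
  qed
  then obtain d g where "d \<le> 2 * k + 1" "is_hpoly n d g"
    and "\<forall>a'. qrank n a' \<le> 2 * k \<longrightarrow> g a' = 0" and "g a \<noteq> 0"
    by blast
  then show ?thesis using ij separating_poly_pad[of n d g "2 * k + 1" i j]
    by (intro exI[of _ "\<lambda>a'. g a' * a' i j ^ (2 * k + 1 - d)"]) auto
qed

theorem lemma1:
  fixes n R :: nat
  assumes "CHAR('a::{field,finite}) = 2"
    and "n \<ge> 1"
    and "even R"
  shows "\<exists>P :: (((nat \<times> nat) \<Rightarrow> nat) \<Rightarrow> 'a) set.
           finite P \<and> (\<forall>p\<in>P. homog_poly n (R + 1) p) \<and>
           (\<forall>a :: nat \<Rightarrow> nat \<Rightarrow> 'a.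
              (\<forall>p\<in>P. eval_homog n (R + 1) p a = 0) \<longleftrightarrow> qrank n a \<le> R)"
proof -
  obtain k where R: "R = 2 * k" using assms(3) by (elim evenE)
  define P where "P = {p :: ((nat \<times> nat) \<Rightarrow> nat) \<Rightarrow> 'a. homog_poly n (R + 1) p \<and>
      (\<forall>a. qrank n a \<le> R \<longrightarrow> eval_homog n (R + 1) p a = 0)}"
  have "finite P" unfolding P_def by (rule finite_subset[OF _ finite_homog_polys]) auto
  moreover have "qrank n a \<le> R" if "\<forall>p\<in>P. eval_homog n (R + 1) p a = 0" for a :: "nat \<Rightarrow> nat \<Rightarrow> 'a"
  proof (rule ccontr)
    assume "\<not> qrank n a \<le> R"
    then obtain g where g: "is_hpoly n (R + 1) g" "\<forall>a'. qrank n a' \<le> R \<longrightarrow> g a' = 0" "g a \<noteq> 0"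
      using separating_poly[OF assms(1)] R by blast
    then obtain p where "homog_poly n (R + 1) p" "\<forall>a. g a = eval_homog n (R + 1) p a"
      unfolding is_hpoly_def by blast
    then show False using g that unfolding P_def by auto
  qed
  ultimately show ?thesis unfolding P_def by blast
qed

end
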